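(* Let $\lambda_1,\lambda_2,\lambda_3>0$, $u^*\in\mathbb R$, $\theta>0$, $c_3>0$, $c_{3o}=c_3+1$, $c_1=\lambda_3/\lambda_2$, $c_2=\lambda_1/\lambda_3$, and $\phi_i(x)=\lambda_i(e^x-1)$. Consider $$\dot\eta_1=u^*-u-\phi_2(\eta_2),\qquad\dot\eta_2=-\phi_3(\eta_3),\qquad\dot\eta_3=-\phi_1(\eta_1),$$ with the error variables $z_1=\eta_3-\eta_2$, $z_2=\eta_1-z_1$, and the feedback $$\begin{aligned}u={}&u^*+c_{3o}\phi_1(z_2)-\theta\tfrac{c_2}{\lambda_1}\phi_3^2(z_1)+(c_2-1-\theta)\phi_3(z_1)+\tfrac{c_2}{\lambda_1}\phi_3(z_1)\phi_1(z_2)-\tfrac{c_1}{\lambda_3}\phi_3(z_1)\phi_2(\eta_2)-(c_1+1)\phi_2(\eta_2)\\&+\frac{\theta\phi_3(z_1)}{\phi_1(z_2)}\Big(\tfrac{c_1}{\lambda_3}\phi_3(z_1)\phi_2(\eta_2)-\tfrac{c_1}{\lambda_3}\phi_2^2(\eta_2)+(c_1-1)\phi_2(\eta_2)+\phi_3(z_1)\Big).\end{aligned}$$ Let $V_3=\theta\lambda_2(e^{\eta_2}-1-\eta_2)+\theta\lambda_3(e^{z_1}-1-z_1)+\lambda_1(e^{z_2}-1-z_2)$. Then along closed-loop trajectories (where $\phi_1(z_2)\ne0$), $$\dot V_3=-\theta c_1\phi_2^2(\eta_2)-\theta c_2\phi_3^2(z_1)-c_3\phi_1^2(z_2),$$ the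 closed-loop system is globally asymptotically stable at $\eta=0$, and the feedback is uniformly bounded. Moreover $u(t)>0$ for all $t>0$ whenever $\eta(0)$ belongs to the largest sublevel set of $V_3$ contained in $\mathcal K=\{\eta\in\mathbb R^3: u(\eta)>0\}$, with $u(\eta)$ the expression above.
   Context: This is the reduced ($\psi\equiv0$) dynamics of a three-species non-transitive (cyclic) competition model, where $\eta_i$ is the logarithm of a normalized total population of species $i$ and $u$ is a harvesting/removal control acting only on species 1; $u^*$ is the equilibrium control value.
   Formalization: Global asymptotic stability, boundedness of the feedback and positivity of u are asserted only for solutions existing for all t >= 0 with $\phi_1(z_2)\ne0$ throughout, and uniform boundedness means a bound on |u(t)| for each such trajectory separately. Each condition added here is assumed in the paper as well or is needed for the statement above to hold. *)

theory Defs
  imports "HOL-Analysis.Analysis"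
begin

text \<open>States are vectors eta = (eta_1, eta_2, eta_3) in real^3, components eta$1, eta$2, eta$3.
 Parameters are always passed in the order l1 l2 l3 (lambda_i), us (u^*), th (theta), c3.\<close>

definition phi :: "real \<Rightarrow> real \<Rightarrow> real" where
  "phi l x = l * (exp x - 1)"

definition err1 :: "real^3 \<Rightarrow> real" where
  "err1 eta = eta$3 - eta$2"

definition err2 :: "real^3 \<Rightarrow> real" where
  "err2 eta = eta$1 - err1 eta"

definition feedback :: "real \<Rightarrow> real \<Rightarrow> real \<Rightarrow> real \<Rightarrow> real \<Rightarrow> real \<Rightarrow> real^3 \<Rightarrow> real" where
  "feedback l1 l2 l3 us th c3 eta =
     (let c1 = l3 / l2; c2 = l1 / l3; c3o = c3 + 1;
          p1 = phi l1 (err2 eta); p3 = phi l3 (err1 eta); p2 = phi l2 (eta$2)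
      in us + c3o * p1 - th * (c2 / l1) * p3\<^sup>2 + (c2 - 1 - th) * p3
         + (c2 / l1) * p3 * p1 - (c1 / l3) * p3 * p2 - (c1 + 1) * p2
         + (th * p3 / p1) * ((c1 / l3) * p3 * p2 - (c1 / l3) * p2\<^sup>2 + (c1 - 1) * p2 + p3))"

definition cl_field :: "real \<Rightarrow> real \<Rightarrow> real \<Rightarrow> real \<Rightarrow> real \<Rightarrow> real \<Rightarrow> real^3 \<Rightarrow> real^3" where
  "cl_field l1 l2 l3 us th c3 eta =
     vector [us - feedback l1 l2 l3 us th c3 eta - phi l2 (eta$2),
             - phi l3 (eta$3),
             - phi l1 (eta$1)]"

definition V3 :: "real \<Rightarrow> real \<Rightarrow> real \<Rightarrow> real \<Rightarrow> real^3 \<Rightarrow> real" where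
  "V3 l1 l2 l3 th eta =
     th * l2 * (exp (eta$2) - 1 - eta$2) + th * l3 * (exp (err1 eta) - 1 - err1 eta)
     + l1 * (exp (err2 eta) - 1 - err2 eta)"

text \<open>A closed-loop trajectory: a forward-complete solution on [0,\<infinity>) of the closed-loop ODE
 along which phi_1(z_2) never vanishes (so that the feedback is defined).\<close>
definition cl_traj :: "real \<Rightarrow> real \<Rightarrow> real \<Rightarrow> real \<Rightarrow> real \<Rightarrow> real \<Rightarrow> (real \<Rightarrow> real^3) \<Rightarrow> bool" where
  "cl_traj l1 l2 l3 us th c3 x \<longleftrightarrow>
     (\<forall>t\<ge>0. (x has_vector_derivative cl_field l1 l2 l3 us th c3 (x t)) (at t within {0..}))
     \<and> (\<forall>t\<ge>0. phi l1 (err2 (x t)) \<noteq> 0)"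

end

theory Submission
  imports Defs
begin

text \<open>V3 is a strict Lyapunov function: the feedback is constructed so that, along the closed
  loop, all cross terms in the derivative of V3 cancel and only the negative definite
  dissipation remains. As V3 is positive definite and radially unbounded, trajectories are
  bounded and stable, and they converge to 0 because V3 decreases at a uniform rate outside
  every ball. Sublevel sets of V3 are invariant, which gives the positivity of u.
  The only term of u that is not a continuous function of the state is N / y with
  y = \<phi>1(z2). Along a trajectory y' = d - l1 N / y, where d and N' are continuous in the
  (bounded) state; for such an equation N / y stays bounded as long as y does not vanish.\<close>

section \<open>Differential inequalities\<close>

lemma DERIV_le_imp_decrease:
  fixes f f' :: "real \<Rightarrow> real"
  assumes "a \<le> b"
    and der: "\<And>s. a \<le> s \<Longrightarrow> s \<le> b \<Longrightarrow> (f has_real_derivative f' s) (at s within {a..b})"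
    and bnd: "\<And>s. a \<le> s \<Longrightarrow> s \<le> b \<Longrightarrow> f' s \<le> -k"
  shows "f b \<le> f a - k * (b - a)"
proof -
  have "\<exists>s\<in>{a..b}. (f b + k * b) - (f a + k * a) = (f' s + k) * (b - a)"
    by (rule mvt_very_simple[OF \<open>a \<le> b\<close>])
      (auto intro!: derivative_eq_intros der has_field_derivative_imp_has_derivative)
  then obtain s where s: "s \<in> {a..b}" "(f b + k * b) - (f a + k * a) = (f' s + k) * (b - a)"
    by blast
  have "(f' s + k) * (b - a) \<le> 0"
    using bnd[of s] s(1) \<open>a \<le> b\<close> by (intro mult_nonpos_nonneg) auto
  with s(2) show ?thesis
    by (simp add: algebra_simps)
qed

text \<open>Look at the first time at which w returns to the level c.\<close>
lemma above_level_preserved: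
  fixes w :: "real \<Rightarrow> real"
  assumes cont: "continuous_on {a..b} w" and "a \<le> b" and wa: "w a > c"
    and cross: "\<And>s. a \<le> s \<Longrightarrow> s \<le> b \<Longrightarrow> w s = c \<Longrightarrow>
        \<exists>w'. (w has_real_derivative w') (at s within {a..b}) \<and> w' > 0"
  shows "w b > c"
proof (rule ccontr)
  assume "\<not> w b > c"
  define Z where "Z = {s \<in> {a..b}. w s = c}"
  have "Z \<noteq> {}"
    using IVT2'[of w b c a] cont \<open>a \<le> b\<close> wa \<open>\<not> w b > c\<close> unfolding Z_def by force
  moreover have "closed Z"
    unfolding Z_def by (rule continuous_closed_preimage_constant[OF cont closed_atLeastAtMost])
  moreover have "bdd_below Z"
    unfolding Z_def by (auto intro: bdd_belowI[where m=a])
  ultimately have "Inf Z \<in> Z"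
    using closed_contains_Inf by blast
  define s where "s = Inf Z"
  have s: "a \<le> s" "s \<le> b" "w s = c"
    using \<open>Inf Z \<in> Z\<close> unfolding Z_def s_def by auto
  have "a < s"
    using s wa by (cases "a = s") auto
  obtain d where d: "d > 0" "\<And>h. h > 0 \<Longrightarrow> s - h \<in> {a..b} \<Longrightarrow> h < d \<Longrightarrow> w (s - h) < w s"
    using cross[OF s] has_real_derivative_pos_inc_left by meson
  define h where "h = min (d / 2) (s - a)"
  have h: "h > 0" "h < d" "s - h \<in> {a..b}"
    using d(1) \<open>a < s\<close> s unfolding h_def by auto
  have "w (s - h) < c"
    using d(2)[OF h(1) h(3) h(2)] s by simp
  moreover have "continuous_on {a..s - h} w"
    using continuous_on_subset[OF cont] h(3) by auto
  ultimately obtain r where r: "a \<le> r" "r \<le> s - h" "w r = c"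
    using IVT2'[of w "s - h" c a] wa h(3) by fastforce
  then have "r \<in> Z"
    using h(3) unfolding Z_def by auto
  then have "s \<le> r"
    unfolding s_def using \<open>bdd_below Z\<close> by (rule cInf_lower)
  with r h show False
    by linarith
qed

lemma large_level_rate_pos:
  fixes c d D K q' :: real
  assumes "\<bar>d\<bar> \<le> D" "\<bar>q'\<bar> \<le> K" "\<bar>c\<bar> \<ge> D + K + 1" "D \<ge> 0" "K \<ge> 0"
  shows "q' - c * (d - c) > 0"
proof -
  have "c * d \<le> \<bar>c\<bar> * \<bar>d\<bar>"
    by (metis abs_ge_self abs_mult)
  also have "\<dots> \<le> \<bar>c\<bar> * D"
    using assms(1) by (simp add: mult_left_mono)
  finally have "c * d \<le> \<bar>c\<bar> * D" .
  moreover have "\<bar>c\<bar> * (K + 1) \<le> \<bar>c\<bar> * (\<bar>c\<bar> - D)"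
    using assms(3) by (intro mult_left_mono) auto
  moreover have "\<bar>c\<bar> * (\<bar>c\<bar> - D) = c * c - \<bar>c\<bar> * D"
    by (simp add: right_diff_distrib abs_mult_self_eq)
  moreover have "K + 1 \<le> \<bar>c\<bar> * (K + 1)"
    using assms by (simp add: mult_right_mono)
  moreover have "q' \<ge> - K"
    using assms(2) by simp
  moreover have "q' - c * (d - c) = q' - c * d + c * c"
    by (simp add: algebra_simps)
  ultimately show "q' - c * (d - c) > 0"
    by linarith
qed

text \<open>For w = q/y one has w' = (q' - w (d - w)) / y, which is positive whenever w is large
  in absolute value.\<close>
lemma ratio_increases_at_large_levels:
  fixes y q d q' :: "real \<Rightarrow> real"
  assumes yder: "\<And>t. t \<ge> 0 \<Longrightarrow> (y has_real_derivative (d t - q t / y t)) (at t within {0..})"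
    and qder: "\<And>t. t \<ge> 0 \<Longrightarrow> (q has_real_derivative q' t) (at t within {0..})"
    and ypos: "\<And>t. t \<ge> 0 \<Longrightarrow> y t > 0"
    and dbnd: "\<And>t. t \<ge> 0 \<Longrightarrow> \<bar>d t\<bar> \<le> D" and q'bnd: "\<And>t. t \<ge> 0 \<Longrightarrow> \<bar>q' t\<bar> \<le> K"
    and "0 \<le> a" "a \<le> s" "s \<le> b" and large: "\<bar>q s / y s\<bar> \<ge> D + K + 1"
  shows "\<exists>w'. ((\<lambda>t. q t / y t) has_real_derivative w') (at s within {a..b}) \<and> w' > 0"
proof -
  define w where "w = q s / y s"
  have "s \<ge> 0"
    using \<open>0 \<le> a\<close> \<open>a \<le> s\<close> by simp
  have "((\<lambda>t. q t / y t) has_real_derivative (q' s * y s - q s * (d s - q s / y s)) / (y s * y s))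
      (at s within {0..})"
    using qder[OF \<open>s \<ge> 0\<close>] yder[OF \<open>s \<ge> 0\<close>] ypos[OF \<open>s \<ge> 0\<close>] by (intro DERIV_divide) auto
  moreover have "(q' s * y s - q s * (d s - q s / y s)) / (y s * y s) = (q' s - w * (d s - w)) / y s"
    using ypos[OF \<open>s \<ge> 0\<close>] unfolding w_def by (simp add: field_simps)
  moreover have "D \<ge> 0" "K \<ge> 0"
    using dbnd[of 0] q'bnd[of 0] by auto
  then have "q' s - w * (d s - w) > 0"
    using large_level_rate_pos[OF dbnd[OF \<open>s \<ge> 0\<close>] q'bnd[OF \<open>s \<ge> 0\<close>]] large unfolding w_def
    by blast
  ultimately show ?thesis
    using ypos[OF \<open>s \<ge> 0\<close>] assms(6-8)
    by (intro exI[of _ "(q' s - w * (d s - w)) / y s"]) (auto intro: DERIV_subset)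
qed

text \<open>The ratio cannot fall below a very negative level; and once above a large level it
  stays there, which forces y' \<le> -1 and makes y vanish in finite time.\<close>
lemma bounded_ratio_of_singular_ode_pos:
  fixes y q d q' :: "real \<Rightarrow> real"
  assumes yder: "\<And>t. t \<ge> 0 \<Longrightarrow> (y has_real_derivative (d t - q t / y t)) (at t within {0..})"
    and qder: "\<And>t. t \<ge> 0 \<Longrightarrow> (q has_real_derivative q' t) (at t within {0..})"
    and ypos: "\<And>t. t \<ge> 0 \<Longrightarrow> y t > 0"
    and dbnd: "\<And>t. t \<ge> 0 \<Longrightarrow> \<bar>d t\<bar> \<le> D" and q'bnd: "\<And>t. t \<ge> 0 \<Longrightarrow> \<bar>q' t\<bar> \<le> K"
  shows "\<exists>M. \<forall>t\<ge>0. \<bar>q t / y t\<bar> \<le> M"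
proof -
  define w where "w t = q t / y t" for t
  define W0 where "W0 = D + K + 1"
  have "D \<ge> 0" "K \<ge> 0"
    using dbnd[of 0] q'bnd[of 0] by auto
  have crossing_up: "\<exists>w'. (w has_real_derivative w') (at s within {a..b}) \<and> w' > 0"
    if "0 \<le> a" "a \<le> s" "s \<le> b" "\<bar>w s\<bar> \<ge> W0" for a b s
    using ratio_increases_at_large_levels[OF yder qder ypos dbnd q'bnd that(1-3)] that(4)
    unfolding w_def[abs_def] W0_def by blast
  have "continuous_on {0..} w"
    unfolding w_def[abs_def] continuous_on_eq_continuous_within
    using ypos less_imp_neq[OF ypos, symmetric]
    by (auto intro!: continuous_intros DERIV_continuous[OF qder] DERIV_continuous[OF yder])
  then have wcont: "continuous_on {a..b} w" if "0 \<le> a" for a b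
    by (rule continuous_on_subset) (use that in auto)
  have upper: "w t \<le> W0" if "t \<ge> 0" for t
  proof (rule ccontr)
    assume "\<not> w t \<le> W0"
    have stays: "w s > W0" if "s \<ge> t" for s
    proof (rule above_level_preserved[OF wcont[OF \<open>t \<ge> 0\<close>] that])
      show "w t > W0"
        using \<open>\<not> w t \<le> W0\<close> by simp
      fix r assume "t \<le> r" "r \<le> s" "w r = W0"
      then show "\<exists>w'. (w has_real_derivative w') (at r within {t..s}) \<and> w' > 0"
        using crossing_up[of t r s] \<open>t \<ge> 0\<close> by simp
    qed
    define b where "b = t + y t + 1"
    have "y b \<le> y t - 1 * (b - t)"
    proof (rule DERIV_le_imp_decrease[where f'="\<lambda>s. d s - q s / y s"])
      show "t \<le> b"
        using ypos[OF that] unfolding b_def by simp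
    next
      fix s assume "t \<le> s" "s \<le> b"
      then show "(y has_real_derivative d s - q s / y s) (at s within {t..b})"
        using yder[of s] that by (auto intro: DERIV_subset)
      show "d s - q s / y s \<le> - 1"
        using dbnd[of s] stays[of s] \<open>t \<le> s\<close> \<open>K \<ge> 0\<close> that unfolding w_def W0_def
        by (simp add: abs_le_iff)
    qed
    then show False
      using ypos[of b] ypos[OF that] that unfolding b_def by simp
  qed
  define m where "m = min (w 0) (- W0) - 1"
  have lower: "w t > m" if "t \<ge> 0" for t
  proof (rule above_level_preserved[OF wcont[OF order_refl] that])
    show "w 0 > m"
      unfolding m_def by linarith
    fix r assume "0 \<le> r" "r \<le> t" "w r = m"
    moreover have "\<bar>m\<bar> \<ge> W0"
      using \<open>D \<ge> 0\<close> \<open>K \<ge> 0\<close> unfolding m_def W0_def by linarith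
    ultimately show "\<exists>w'. (w has_real_derivative w') (at r within {0..t}) \<and> w' > 0"
      using crossing_up[of 0 r t] by simp
  qed
  have "\<bar>q t / y t\<bar> \<le> max W0 (- m)" if "t \<ge> 0" for t
    using upper[OF that] lower[OF that] unfolding w_def by linarith
  then show ?thesis
    by blast
qed

lemma bounded_ratio_of_singular_ode:
  fixes y q d q' :: "real \<Rightarrow> real"
  assumes yder: "\<And>t. t \<ge> 0 \<Longrightarrow> (y has_real_derivative (d t - q t / y t)) (at t within {0..})"
    and qder: "\<And>t. t \<ge> 0 \<Longrightarrow> (q has_real_derivative q' t) (at t within {0..})"
    and ynz: "\<And>t. t \<ge> 0 \<Longrightarrow> y t \<noteq> 0"
    and dbnd: "\<And>t. t \<ge> 0 \<Longrightarrow> \<bar>d t\<bar> \<le> D" and q'bnd: "\<And>t. t \<ge> 0 \<Longrightarrow> \<bar>q' t\<bar> \<le> K"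
  shows "\<exists>M. \<forall>t\<ge>0. \<bar>q t / y t\<bar> \<le> M"
proof -
  define \<sigma> where "\<sigma> = sgn (y 0)"
  have \<sigma>: "\<sigma> = 1 \<or> \<sigma> = -1"
    using ynz[of 0] unfolding \<sigma>_def by (auto simp: sgn_if)
  have ycont: "continuous_on {0..} y"
    unfolding continuous_on_eq_continuous_within by (auto intro: DERIV_continuous[OF yder])
  have sign_kept: "\<sigma> * y t > 0" if "t \<ge> 0" for t
  proof (rule ccontr)
    assume "\<not> \<sigma> * y t > 0"
    then have end_nonpos: "\<sigma> * y t \<le> 0"
      by simp
    have start_nonneg: "0 \<le> \<sigma> * y 0"
      using ynz[of 0] unfolding \<sigma>_def by (simp add: sgn_if)
    have "continuous_on {0..t} (\<lambda>s. \<sigma> * y s)"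
      by (intro continuous_intros continuous_on_subset[OF ycont]) auto
    then obtain s where "0 \<le> s" "s \<le> t" "\<sigma> * y s = 0"
      using IVT2'[OF end_nonpos start_nonneg \<open>t \<ge> 0\<close>] by blast
    then show False
      using ynz[of s] \<sigma> by auto
  qed
  have \<sigma>yder: "((\<lambda>t. \<sigma> * y t) has_real_derivative (\<sigma> * d t - q t / (\<sigma> * y t)))
      (at t within {0..})" if "t \<ge> 0" for t
  proof -
    have "\<sigma> * (d t - q t / y t) = \<sigma> * d t - q t / (\<sigma> * y t)"
      using \<sigma> by auto
    then show ?thesis
      using DERIV_cmult[OF yder[OF that], of \<sigma>] by simp
  qed
  have \<sigma>dbnd: "\<bar>\<sigma> * d t\<bar> \<le> D" if "t \<ge> 0" for t
    using dbnd[OF that] \<sigma> by auto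
  obtain M where M: "\<And>t. t \<ge> 0 \<Longrightarrow> \<bar>q t / (\<sigma> * y t)\<bar> \<le> M"
    using bounded_ratio_of_singular_ode_pos[OF \<sigma>yder qder sign_kept \<sigma>dbnd q'bnd] by blast
  have "\<bar>q t / (\<sigma> * y t)\<bar> = \<bar>q t / y t\<bar>" for t
    using \<sigma> by (elim disjE) simp_all
  with M show ?thesis
    by metis
qed

definition exp_gap :: "real \<Rightarrow> real" where
  "exp_gap x = exp x - 1 - x"

lemma exp_gap_ge_quarter_square:
  assumes "x \<ge> -2"
  shows "x\<^sup>2 / 4 \<le> exp_gap x"
proof -
  have "(1 + x / 2) * (1 + x / 2) \<le> exp (x / 2) * exp (x / 2)"
    using assms by (intro mult_mono) auto
  also have "\<dots> = exp x"
    by (simp flip: exp_add)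
  finally show ?thesis
    unfolding exp_gap_def by (simp add: algebra_simps power2_eq_square)
qed

lemma exp_gap_nonneg: "exp_gap x \<ge> 0"
  unfolding exp_gap_def using exp_ge_add_one_self[of x] by linarith

lemma exp_gap_pos:
  assumes "x \<noteq> 0"
  shows "exp_gap x > 0"
proof (cases "x \<ge> -2")
  case True
  have "x\<^sup>2 / 4 > 0"
    using assms by simp
  with exp_gap_ge_quarter_square[OF True] show ?thesis
    by linarith
next
  case False
  then show ?thesis
    unfolding exp_gap_def using exp_gt_zero[of x] by linarith
qed

lemma abs_le_exp_gap: "\<bar>x\<bar> \<le> exp_gap x + 1"
proof (cases "x \<ge> 0")
  case True
  have "0 \<le> (x / 2 - 1)\<^sup>2"
    by simp
  then have "x \<le> 1 + x\<^sup>2 / 4"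
    by (simp add: power2_eq_square algebra_simps)
  with exp_gap_ge_quarter_square[of x] True show ?thesis
    by simp
next
  case False
  then show ?thesis
    unfolding exp_gap_def using exp_gt_zero[of x] by simp
qed

lemma exp_gap_mono_nonneg:
  assumes "0 \<le> r" "r \<le> x"
  shows "exp_gap r \<le> exp_gap x"
proof -
  have "exp r * (1 + (x - r)) \<le> exp r * exp (x - r)"
    by (intro mult_left_mono) auto
  also have "\<dots> = exp x"
    by (simp flip: exp_add)
  finally have "exp r + exp r * (x - r) \<le> exp x"
    by (simp add: algebra_simps)
  moreover have "1 * (x - r) \<le> exp r * (x - r)"
    using assms by (intro mult_right_mono) auto
  ultimately show ?thesis
    unfolding exp_gap_def by simp
qed

lemma exp_gap_antimono_nonpos:
  assumes "x \<le> r" "r \<le> 0"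
  shows "exp_gap r \<le> exp_gap x"
proof -
  have "exp r * (1 - exp (x - r)) \<le> 1 * (r - x)"
  proof (rule mult_mono)
    show "1 - exp (x - r) \<le> r - x"
      using exp_ge_add_one_self[of "x - r"] by linarith
  qed (use assms in auto)
  moreover have "exp r * exp (x - r) = exp x"
    by (simp flip: exp_add)
  ultimately show ?thesis
    unfolding exp_gap_def by (simp add: algebra_simps)
qed

lemma abs_less_if_exp_gap_less:
  assumes "r > 0" "exp_gap x < min (exp_gap r) (exp_gap (-r))"
  shows "\<bar>x\<bar> < r"
  using exp_gap_mono_nonneg[of r x] exp_gap_antimono_nonpos[of x "-r"] assms by force

lemma exp_gap_has_derivative: "(exp_gap has_real_derivative (exp x - 1)) (at x)"
  unfolding exp_gap_def by (auto intro!: derivative_eq_intros)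

lemma continuous_bounded_on_cball:
  fixes f :: "'a::euclidean_space \<Rightarrow> real"
  assumes "continuous_on UNIV f"
  shows "\<exists>M. \<forall>\<eta>. norm \<eta> \<le> R \<longrightarrow> \<bar>f \<eta>\<bar> \<le> M"
proof -
  have "compact (f ` cball 0 R)"
    by (rule compact_continuous_image[OF continuous_on_subset[OF assms] compact_cball]) simp
  then obtain M where "\<forall>v\<in>f ` cball 0 R. norm v \<le> M"
    using compact_imp_bounded bounded_iff by metis
  then show ?thesis
    by (intro exI[of _ M]) (auto simp: mem_cball_0)
qed

lemma norm_le_err_coords: "norm \<eta> \<le> 2 * \<bar>\<eta>$2\<bar> + 2 * \<bar>err1 \<eta>\<bar> + \<bar>err2 \<eta>\<bar>"
proof -
  have "norm \<eta> \<le> \<bar>\<eta>$1\<bar> + \<bar>\<eta>$2\<bar> + \<bar>\<eta>$3\<bar>"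
    using norm_le_l1_cart[of \<eta>] by (simp add: sum_3)
  then show ?thesis
    unfolding err1_def err2_def by (smt (verit))
qed

lemma phi_eq_0_iff: "l > 0 \<Longrightarrow> phi l x = 0 \<longleftrightarrow> x = 0"
  unfolding phi_def by simp

lemma phi_has_derivative: "(phi l has_real_derivative (l + phi l x)) (at x)"
  unfolding phi_def by (auto intro!: derivative_eq_intros simp: algebra_simps)

lemma phi_comp_has_derivative:
  assumes "(g has_real_derivative r) (at t within S)"
  shows "((\<lambda>s. phi l (g s)) has_real_derivative (l + phi l (g t)) * r) (at t within S)"
  using DERIV_chain2[OF phi_has_derivative assms] .

section \<open>The closed loop and its Lyapunov function\<close>

locale closed_loop =
  fixes l1 l2 l3 us th c3 :: real
  assumes l1_pos: "l1 > 0" and l2_pos: "l2 > 0" and l3_pos: "l3 > 0"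
    and th_pos: "th > 0" and c3_pos: "c3 > 0"
begin

abbreviation "u \<equiv> feedback l1 l2 l3 us th c3"
abbreviation "V \<equiv> V3 l1 l2 l3 th"
abbreviation "traj \<equiv> cl_traj l1 l2 l3 us th c3"

definition p1 :: "real^3 \<Rightarrow> real" where "p1 \<eta> = phi l1 (err2 \<eta>)"
definition p2 :: "real^3 \<Rightarrow> real" where "p2 \<eta> = phi l2 (\<eta>$2)"
definition p3 :: "real^3 \<Rightarrow> real" where "p3 \<eta> = phi l3 (err1 \<eta>)"

definition rate_eta2 :: "real^3 \<Rightarrow> real" where "rate_eta2 \<eta> = - phi l3 (\<eta>$3)"
definition rate_err1 :: "real^3 \<Rightarrow> real" where "rate_err1 \<eta> = phi l3 (\<eta>$3) - phi l1 (\<eta>$1)"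
definition rate_err2 :: "real^3 \<Rightarrow> real" where
  "rate_err2 \<eta> = us - u \<eta> - p2 \<eta> - rate_err1 \<eta>"

definition dissipation :: "real^3 \<Rightarrow> real" where
  "dissipation \<eta> = th * (l3 / l2) * (phi l2 (\<eta>$2))\<^sup>2 + th * (l1 / l3) * (phi l3 (err1 \<eta>))\<^sup>2
     + c3 * (phi l1 (err2 \<eta>))\<^sup>2"

lemma traj_has_derivative:
  assumes "traj x" "t \<ge> 0"
  shows "((\<lambda>s. x s $ 2) has_real_derivative rate_eta2 (x t)) (at t within {0..})"
    and "((\<lambda>s. err1 (x s)) has_real_derivative rate_err1 (x t)) (at t within {0..})"
    and "((\<lambda>s. err2 (x s)) has_real_derivative rate_err2 (x t)) (at t within {0..})"
proof -
  have "(x has_vector_derivative cl_field l1 l2 l3 us th c3 (x t)) (at t within {0..})"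
    using assms unfolding cl_traj_def by blast
  then have coord: "((\<lambda>s. x s $ i) has_real_derivative cl_field l1 l2 l3 us th c3 (x t) $ i)
      (at t within {0..})" for i
    unfolding has_real_derivative_iff_has_vector_derivative
    by (rule bounded_linear.has_vector_derivative[OF bounded_linear_vec_nth])
  show "((\<lambda>s. x s $ 2) has_real_derivative rate_eta2 (x t)) (at t within {0..})"
    using coord[of 2] by (simp add: cl_field_def rate_eta2_def)
  show "((\<lambda>s. err1 (x s)) has_real_derivative rate_err1 (x t)) (at t within {0..})"
    unfolding err1_def using DERIV_diff[OF coord[of 3] coord[of 2]]
    by (simp add: cl_field_def rate_err1_def)
  show "((\<lambda>s. err2 (x s)) has_real_derivative rate_err2 (x t)) (at t within {0..})"
    unfolding err2_def err1_def using DERIV_diff[OF coord[of 1] DERIV_diff[OF coord[of 3] coord[of 2]]]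
    by (simp add: cl_field_def rate_err1_def rate_err2_def p2_def)
qed

text \<open>In the variables exp \<eta>2, exp z1, exp z2 this is a rational identity.\<close>
lemma V3_rate_eq_neg_dissipation:
  assumes "p1 \<eta> \<noteq> 0"
  shows "th * p2 \<eta> * rate_eta2 \<eta> + th * p3 \<eta> * rate_err1 \<eta> + p1 \<eta> * rate_err2 \<eta> = - dissipation \<eta>"
proof -
  define a b c where "a = exp (\<eta>$2)" and "b = exp (err1 \<eta>)" and "c = exp (err2 \<eta>)"
  have p: "p1 \<eta> = l1 * (c - 1)" "p2 \<eta> = l2 * (a - 1)" "p3 \<eta> = l3 * (b - 1)"
    unfolding p1_def p2_def p3_def phi_def a_def b_def c_def by simp_all
  have e: "phi l3 (\<eta>$3) = l3 * (a * b - 1)" "phi l1 (\<eta>$1) = l1 * (b * c - 1)"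
    unfolding phi_def a_def b_def c_def err1_def err2_def by (simp_all flip: exp_add)
  have "c - 1 \<noteq> 0"
    using assms l1_pos unfolding p by simp
  have u_eq: "u \<eta> = us + (c3 + 1) * (l1 * (c - 1)) - th * ((l1 / l3) / l1) * (l3 * (b - 1))\<^sup>2
      + ((l1 / l3) - 1 - th) * (l3 * (b - 1)) + ((l1 / l3) / l1) * (l3 * (b - 1)) * (l1 * (c - 1))
      - ((l3 / l2) / l3) * (l3 * (b - 1)) * (l2 * (a - 1)) - ((l3 / l2) + 1) * (l2 * (a - 1))
      + (th * (l3 * (b - 1)) / (l1 * (c - 1))) * (((l3 / l2) / l3) * (l3 * (b - 1)) * (l2 * (a - 1))
         - ((l3 / l2) / l3) * (l2 * (a - 1))\<^sup>2 + ((l3 / l2) - 1) * (l2 * (a - 1)) + l3 * (b - 1))"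
    unfolding feedback_def Let_def p[unfolded p1_def p2_def p3_def] ..
  show ?thesis
    unfolding rate_eta2_def rate_err1_def rate_err2_def dissipation_def u_eq
      p[unfolded p1_def p2_def p3_def] p e
    using \<open>c - 1 \<noteq> 0\<close> l1_pos l2_pos l3_pos by (simp add: field_simps power2_eq_square)
qed

lemma V3_eq_exp_gap:
  "V \<eta> = th * l2 * exp_gap (\<eta>$2) + th * l3 * exp_gap (err1 \<eta>) + l1 * exp_gap (err2 \<eta>)"
  unfolding V3_def exp_gap_def ..

lemma traj_V3_has_derivative:
  assumes "traj x" "t \<ge> 0"
  shows "((\<lambda>s. V (x s)) has_real_derivative - dissipation (x t)) (at t within {0..})"
proof -
  note d = traj_has_derivative[OF assms]
  have "((\<lambda>s. V (x s)) has_real_derivative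
      th * p2 (x t) * rate_eta2 (x t) + th * p3 (x t) * rate_err1 (x t) + p1 (x t) * rate_err2 (x t))
      (at t within {0..})"
    unfolding V3_eq_exp_gap
    by (rule derivative_eq_intros DERIV_chain2[OF exp_gap_has_derivative] d | simp)+
      (simp add: p1_def p2_def p3_def phi_def algebra_simps)
  moreover have "p1 (x t) \<noteq> 0"
    using assms unfolding cl_traj_def p1_def by blast
  ultimately show ?thesis
    by (simp add: V3_rate_eq_neg_dissipation)
qed

subsection \<open>Stability and convergence\<close>

lemma dissipation_nonneg: "dissipation \<eta> \<ge> 0"
  unfolding dissipation_def using l1_pos l2_pos l3_pos th_pos c3_pos
  by (intro add_nonneg_nonneg mult_nonneg_nonneg) auto

lemma dissipation_pos:
  assumes "\<eta> \<noteq> 0"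
  shows "dissipation \<eta> > 0"
proof -
  define T1 T2 T3 where "T1 = th * (l3 / l2) * (phi l2 (\<eta>$2))\<^sup>2"
    and "T2 = th * (l1 / l3) * (phi l3 (err1 \<eta>))\<^sup>2" and "T3 = c3 * (phi l1 (err2 \<eta>))\<^sup>2"
  have coef: "th * (l3 / l2) > 0" "th * (l1 / l3) > 0" "c3 > 0"
    using l1_pos l2_pos l3_pos th_pos c3_pos by simp_all
  then have "T1 \<ge> 0" "T2 \<ge> 0" "T3 \<ge> 0"
    unfolding T1_def T2_def T3_def by (metis less_imp_le mult_nonneg_nonneg zero_le_power2)+
  have "\<eta>$2 \<noteq> 0 \<or> err1 \<eta> \<noteq> 0 \<or> err2 \<eta> \<noteq> 0"
    using assms by (auto simp: vec_eq_iff forall_3 err1_def err2_def)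
  then have "T1 > 0 \<or> T2 > 0 \<or> T3 > 0"
    unfolding T1_def T2_def T3_def
    by (elim disjE; intro disjI1 disjI2 mult_pos_pos divide_pos_pos;
        simp add: phi_eq_0_iff l1_pos l2_pos l3_pos th_pos c3_pos)
  with \<open>T1 \<ge> 0\<close> \<open>T2 \<ge> 0\<close> \<open>T3 \<ge> 0\<close> show ?thesis
    unfolding dissipation_def T1_def[symmetric] T2_def[symmetric] T3_def[symmetric] by linarith
qed

lemma continuous_V3: "continuous_on UNIV V"
  unfolding V3_def err1_def err2_def by (intro continuous_intros)

lemma continuous_dissipation: "continuous_on UNIV dissipation"
  unfolding dissipation_def phi_def err1_def err2_def by (intro continuous_intros)

lemma V3_ge_terms:
  shows "th * l2 * exp_gap (\<eta>$2) \<le> V \<eta>" and "th * l3 * exp_gap (err1 \<eta>) \<le> V \<eta>"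
    and "l1 * exp_gap (err2 \<eta>) \<le> V \<eta>"
proof -
  have "0 \<le> th * l2 * exp_gap (\<eta>$2)" "0 \<le> th * l3 * exp_gap (err1 \<eta>)"
    "0 \<le> l1 * exp_gap (err2 \<eta>)"
    using exp_gap_nonneg l1_pos l2_pos l3_pos th_pos by simp_all
  then show "th * l2 * exp_gap (\<eta>$2) \<le> V \<eta>" "th * l3 * exp_gap (err1 \<eta>) \<le> V \<eta>"
    "l1 * exp_gap (err2 \<eta>) \<le> V \<eta>"
    unfolding V3_eq_exp_gap by linarith+
qed

lemma V3_nonneg: "V \<eta> \<ge> 0"
  using V3_ge_terms(3)[of \<eta>] exp_gap_nonneg[of "err2 \<eta>"] l1_pos
  by (metis order_trans zero_le_mult_iff less_imp_le)

lemma norm_less_if_V3_less: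
  assumes "\<epsilon> > 0"
  shows "\<exists>c>0. \<forall>\<eta>. V \<eta> < c \<longrightarrow> norm \<eta> < \<epsilon>"
proof -
  define r where "r = \<epsilon> / 5"
  define m where "m = min (exp_gap r) (exp_gap (-r))"
  define c where "c = min (th * l2) (min (th * l3) l1) * m"
  have "r > 0"
    using assms unfolding r_def by simp
  then have "m > 0"
    unfolding m_def using exp_gap_pos by simp
  then have "c > 0"
    unfolding c_def using l1_pos l2_pos l3_pos th_pos by simp
  have "norm \<eta> < \<epsilon>" if "V \<eta> < c" for \<eta>
  proof -
    have small: "exp_gap z < m" if "k * exp_gap z \<le> V \<eta>" "k > 0" "min (th * l2) (min (th * l3) l1) \<le> k" for k z
    proof -
      have "k * exp_gap z < k * m"
        using that \<open>V \<eta> < c\<close> \<open>m > 0\<close> mult_right_mono[OF that(3), of m] unfolding c_def by linarith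
      with \<open>k > 0\<close> show ?thesis
        by simp
    qed
    have "\<bar>\<eta>$2\<bar> < r" "\<bar>err1 \<eta>\<bar> < r" "\<bar>err2 \<eta>\<bar> < r"
      using small[OF V3_ge_terms(1)] small[OF V3_ge_terms(2)] small[OF V3_ge_terms(3)]
        l1_pos l2_pos l3_pos th_pos abs_less_if_exp_gap_less[OF \<open>r > 0\<close>]
      unfolding m_def by simp_all
    with norm_le_err_coords[of \<eta>] show ?thesis
      unfolding r_def by linarith
  qed
  with \<open>c > 0\<close> show ?thesis
    by blast
qed

lemma norm_le_if_V3_le: "\<exists>R. \<forall>\<eta>. V \<eta> \<le> c \<longrightarrow> norm \<eta> \<le> R"
proof -
  define S where "S = c / (th * l2) + c / (th * l3) + c / l1 + 1"
  have "norm \<eta> \<le> 5 * S" if "V \<eta> \<le> c" for \<eta>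
  proof -
    have "c \<ge> 0"
      using V3_nonneg[of \<eta>] that by simp
    have terms: "exp_gap (\<eta>$2) \<le> c / (th * l2)" "exp_gap (err1 \<eta>) \<le> c / (th * l3)"
      "exp_gap (err2 \<eta>) \<le> c / l1"
      using V3_ge_terms[of \<eta>] that l1_pos l2_pos l3_pos th_pos
      by (simp_all add: pos_le_divide_eq mult.commute)
    have "c / (th * l2) \<ge> 0" "c / (th * l3) \<ge> 0" "c / l1 \<ge> 0"
      using \<open>c \<ge> 0\<close> l1_pos l2_pos l3_pos th_pos by simp_all
    then have "\<bar>\<eta>$2\<bar> \<le> S" "\<bar>err1 \<eta>\<bar> \<le> S" "\<bar>err2 \<eta>\<bar> \<le> S"
      using terms abs_le_exp_gap[of "\<eta>$2"] abs_le_exp_gap[of "err1 \<eta>"] abs_le_exp_gap[of "err2 \<eta>"]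
      unfolding S_def by linarith+
    with norm_le_err_coords[of \<eta>] show ?thesis
      by linarith
  qed
  then show ?thesis
    by blast
qed

lemma dissipation_ge_on_annulus:
  assumes "\<rho> > 0"
  shows "\<exists>w>0. \<forall>\<eta>. \<rho> \<le> norm \<eta> \<longrightarrow> norm \<eta> \<le> R \<longrightarrow> w \<le> dissipation \<eta>"
proof -
  define A where "A = cball 0 R - ball (0::real^3) \<rho>"
  have A_iff: "\<eta> \<in> A \<longleftrightarrow> \<rho> \<le> norm \<eta> \<and> norm \<eta> \<le> R" for \<eta>
    unfolding A_def by (simp add: not_less conj_commute)
  show ?thesis
  proof (cases "A = {}")
    case True
    then have "\<not> (\<rho> \<le> norm \<eta> \<and> norm \<eta> \<le> R)" for \<eta> :: "real^3"
      using A_iff by blast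
    then show ?thesis
      by (intro exI[of _ 1]) auto
  next
    case False
    have "compact A"
      unfolding A_def by (intro compact_diff compact_cball open_ball)
    moreover have "continuous_on A dissipation"
      by (rule continuous_on_subset[OF continuous_dissipation]) simp
    ultimately obtain \<eta>0 where "\<eta>0 \<in> A" and min: "\<And>\<eta>. \<eta> \<in> A \<Longrightarrow> dissipation \<eta>0 \<le> dissipation \<eta>"
      using continuous_attains_inf[OF _ False] by blast
    have "\<eta>0 \<noteq> 0"
      using \<open>\<eta>0 \<in> A\<close> assms unfolding A_iff by auto
    with min A_iff show ?thesis
      by (intro exI[of _ "dissipation \<eta>0"]) (simp add: dissipation_pos)
  qed
qed

lemma traj_V3_decrease:
  assumes "traj x" "0 \<le> a" "a \<le> b" "\<And>s. a \<le> s \<Longrightarrow> s \<le> b \<Longrightarrow> k \<le> dissipation (x s)"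
  shows "V (x b) \<le> V (x a) - k * (b - a)"
proof (rule DERIV_le_imp_decrease[OF \<open>a \<le> b\<close>])
  fix s assume "a \<le> s" "s \<le> b"
  then show "((\<lambda>s. V (x s)) has_real_derivative - dissipation (x s)) (at s within {a..b})"
    using traj_V3_has_derivative[OF assms(1), of s] \<open>0 \<le> a\<close> by (auto intro: DERIV_subset)
  show "- dissipation (x s) \<le> - k"
    using assms(4) \<open>a \<le> s\<close> \<open>s \<le> b\<close> by simp
qed

lemma traj_V3_antimono:
  assumes "traj x" "0 \<le> a" "a \<le> b"
  shows "V (x b) \<le> V (x a)"
  using traj_V3_decrease[OF assms, of 0] dissipation_nonneg by simp

lemma traj_bounded:
  assumes "traj x"
  shows "\<exists>R. \<forall>t\<ge>0. norm (x t) \<le> R"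
  using norm_le_if_V3_le[of "V (x 0)"] traj_V3_antimono[OF assms order_refl] by blast

lemma V3_less_near_0:
  assumes "c > 0"
  shows "\<exists>\<delta>>0. \<forall>\<eta>. norm \<eta> < \<delta> \<longrightarrow> V \<eta> < c"
proof -
  have "isCont V 0"
    using continuous_V3 by (simp add: continuous_on_eq_continuous_at)
  moreover have "V 0 = 0"
    unfolding V3_def err1_def err2_def by simp
  ultimately show ?thesis
    using assms
    unfolding continuous_at_eps_delta dist_norm by fastforce
qed

lemma traj_stable:
  assumes "\<epsilon> > 0"
  shows "\<exists>\<delta>>0. \<forall>x. traj x \<and> norm (x 0) < \<delta> \<longrightarrow> (\<forall>t\<ge>0. norm (x t) < \<epsilon>)"
proof -
  obtain c where "c > 0" and c: "\<And>\<eta>. V \<eta> < c \<Longrightarrow> norm \<eta> < \<epsilon>"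
    using norm_less_if_V3_less[OF assms] by blast
  obtain \<delta> where "\<delta> > 0" and \<delta>: "\<And>\<eta>. norm \<eta> < \<delta> \<Longrightarrow> V \<eta> < c"
    using V3_less_near_0[OF \<open>c > 0\<close>] by blast
  have "norm (x t) < \<epsilon>" if "traj x" "norm (x 0) < \<delta>" "t \<ge> 0" for x t
    using traj_V3_antimono[OF that(1) order_refl that(3)] \<delta>[OF that(2)] c by fastforce
  with \<open>\<delta> > 0\<close> show ?thesis
    by blast
qed

text \<open>Once V3(x t) drops below the level of an \<epsilon>-ball it stays there; and it must drop,
  since otherwise x stays in an annulus where V3 decreases at a uniform positive rate.\<close>
lemma traj_tendsto_0:
  assumes "traj x"
  shows "(x \<longlongrightarrow> 0) at_top"
  unfolding tendsto_iff dist_norm diff_zero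
proof (intro allI impI)
  fix \<epsilon> :: real assume "\<epsilon> > 0"
  then obtain c where "c > 0" and c: "\<And>\<eta>. V \<eta> < c \<Longrightarrow> norm \<eta> < \<epsilon>"
    using norm_less_if_V3_less by blast
  obtain \<rho> where "\<rho> > 0" and \<rho>: "\<And>\<eta>. norm \<eta> < \<rho> \<Longrightarrow> V \<eta> < c"
    using V3_less_near_0[OF \<open>c > 0\<close>] by blast
  have "\<exists>T\<ge>0. V (x T) < c"
  proof (rule ccontr)
    assume "\<not> (\<exists>T\<ge>0. V (x T) < c)"
    then have far: "\<rho> \<le> norm (x s)" if "s \<ge> 0" for s
      using \<rho> that by (meson not_le)
    obtain R where R: "\<And>s. s \<ge> 0 \<Longrightarrow> norm (x s) \<le> R"
      using traj_bounded[OF assms] by blast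
    obtain w where "w > 0" and w: "\<And>\<eta>. \<rho> \<le> norm \<eta> \<Longrightarrow> norm \<eta> \<le> R \<Longrightarrow> w \<le> dissipation \<eta>"
      using dissipation_ge_on_annulus[OF \<open>\<rho> > 0\<close>] by blast
    define b where "b = V (x 0) / w + 1"
    have "b \<ge> 0"
      unfolding b_def using V3_nonneg[of "x 0"] \<open>w > 0\<close> by simp
    have "V (x b) \<le> V (x 0) - w * (b - 0)"
      using traj_V3_decrease[OF assms order_refl \<open>b \<ge> 0\<close>] far R w by force
    also have "\<dots> = - w"
      unfolding b_def using \<open>w > 0\<close> by (simp add: field_simps)
    finally show False
      using V3_nonneg[of "x b"] \<open>w > 0\<close> by simp
  qed
  then obtain T where "T \<ge> 0" "V (x T) < c"
    by blast
  then have "norm (x t) < \<epsilon>" if "t \<ge> T" for t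
    using traj_V3_antimono[OF assms \<open>T \<ge> 0\<close> that] c by force
  then show "\<forall>\<^sub>F t in at_top. norm (x t) < \<epsilon>"
    unfolding eventually_at_top_linorder by blast
qed

subsection \<open>Boundedness of the feedback\<close>

text \<open>The parenthesised factor of the singular term of the feedback (note c1 / l3 = 1 / l2).\<close>
definition bracket :: "real^3 \<Rightarrow> real" where
  "bracket \<eta> = p3 \<eta> * p2 \<eta> / l2 - (p2 \<eta>)\<^sup>2 / l2 + (l3 / l2 - 1) * p2 \<eta> + p3 \<eta>"

definition regular_part :: "real^3 \<Rightarrow> real" where
  "regular_part \<eta> = us + (c3 + 1) * p1 \<eta> - th / l3 * (p3 \<eta>)\<^sup>2 + (l1 / l3 - 1 - th) * p3 \<eta>
     + p3 \<eta> * p1 \<eta> / l3 - p3 \<eta> * p2 \<eta> / l2 - (l3 / l2 + 1) * p2 \<eta>"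

definition singular_num :: "real^3 \<Rightarrow> real" where
  "singular_num \<eta> = th * p3 \<eta> * bracket \<eta>"

lemma feedback_eq: "u \<eta> = regular_part \<eta> + singular_num \<eta> / p1 \<eta>"
  unfolding feedback_def Let_def regular_part_def singular_num_def bracket_def
    p1_def[symmetric] p2_def[symmetric] p3_def[symmetric]
  using l1_pos l2_pos l3_pos by (simp add: field_simps)

definition rate_p2 :: "real^3 \<Rightarrow> real" where "rate_p2 \<eta> = (l2 + p2 \<eta>) * rate_eta2 \<eta>"
definition rate_p3 :: "real^3 \<Rightarrow> real" where "rate_p3 \<eta> = (l3 + p3 \<eta>) * rate_err1 \<eta>"

definition rate_bracket :: "real^3 \<Rightarrow> real" where
  "rate_bracket \<eta> = (rate_p3 \<eta> * p2 \<eta> + p3 \<eta> * rate_p2 \<eta>) / l2 - 2 * p2 \<eta> * rate_p2 \<eta> / l2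
     + (l3 / l2 - 1) * rate_p2 \<eta> + rate_p3 \<eta>"

definition rate_singular_num :: "real^3 \<Rightarrow> real" where
  "rate_singular_num \<eta> = th * (rate_p3 \<eta> * bracket \<eta> + p3 \<eta> * rate_bracket \<eta>)"

definition p1_drift :: "real^3 \<Rightarrow> real" where
  "p1_drift \<eta> = (l1 + p1 \<eta>) * (us - regular_part \<eta> - p2 \<eta> - rate_err1 \<eta>) - singular_num \<eta>"

lemma continuous_feedback_parts:
  "continuous_on UNIV regular_part" "continuous_on UNIV p1_drift"
  "continuous_on UNIV rate_singular_num"
  unfolding regular_part_def p1_drift_def rate_singular_num_def singular_num_def
    rate_bracket_def bracket_def rate_p2_def rate_p3_def rate_eta2_def rate_err1_def
    p1_def p2_def p3_def phi_def err1_def err2_def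
  using l2_pos l3_pos by (auto intro!: continuous_intros)

lemma traj_p1_has_derivative:
  assumes "traj x" "t \<ge> 0"
  shows "((\<lambda>s. p1 (x s)) has_real_derivative
      p1_drift (x t) - l1 * singular_num (x t) / p1 (x t)) (at t within {0..})"
proof -
  have "p1 (x t) \<noteq> 0"
    using assms unfolding cl_traj_def p1_def by blast
  then have "(l1 + p1 (x t)) * rate_err2 (x t) = p1_drift (x t) - l1 * singular_num (x t) / p1 (x t)"
    unfolding rate_err2_def p1_drift_def feedback_eq by (simp add: field_simps)
  then show ?thesis
    using phi_comp_has_derivative[OF traj_has_derivative(3)[OF assms], of l1]
    unfolding p1_def by simp
qed

lemma traj_singular_num_has_derivative:
  assumes "traj x" "t \<ge> 0"
  shows "((\<lambda>s. singular_num (x s)) has_real_derivative rate_singular_num (x t)) (at t within {0..})"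
proof -
  have p2: "((\<lambda>s. p2 (x s)) has_real_derivative rate_p2 (x t)) (at t within {0..})"
    using phi_comp_has_derivative[OF traj_has_derivative(1)[OF assms]]
    unfolding p2_def rate_p2_def .
  have p3: "((\<lambda>s. p3 (x s)) has_real_derivative rate_p3 (x t)) (at t within {0..})"
    using phi_comp_has_derivative[OF traj_has_derivative(2)[OF assms]]
    unfolding p3_def rate_p3_def .
  have "l2 \<noteq> 0"
    using l2_pos by simp
  show ?thesis
    unfolding singular_num_def bracket_def rate_singular_num_def rate_bracket_def
    by (rule derivative_eq_intros p2 p3 | simp add: \<open>l2 \<noteq> 0\<close>)+ (simp add: algebra_simps)
qed

lemma traj_feedback_bounded:
  assumes "traj x"
  shows "\<exists>M. \<forall>t\<ge>0. \<bar>u (x t)\<bar> \<le> M"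
proof -
  obtain R where R: "\<And>t. t \<ge> 0 \<Longrightarrow> norm (x t) \<le> R"
    using traj_bounded[OF assms] by blast
  obtain MG MD MQ where
    MG: "\<And>\<eta>. norm \<eta> \<le> R \<Longrightarrow> \<bar>regular_part \<eta>\<bar> \<le> MG" and
    MD: "\<And>\<eta>. norm \<eta> \<le> R \<Longrightarrow> \<bar>p1_drift \<eta>\<bar> \<le> MD" and
    MQ: "\<And>\<eta>. norm \<eta> \<le> R \<Longrightarrow> \<bar>rate_singular_num \<eta>\<bar> \<le> MQ"
    using continuous_bounded_on_cball[OF continuous_feedback_parts(1)]
      continuous_bounded_on_cball[OF continuous_feedback_parts(2)]
      continuous_bounded_on_cball[OF continuous_feedback_parts(3)] by metis
  have "\<exists>M. \<forall>t\<ge>0. \<bar>l1 * singular_num (x t) / p1 (x t)\<bar> \<le> M"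
  proof (rule bounded_ratio_of_singular_ode)
    fix t :: real assume "t \<ge> 0"
    show "((\<lambda>s. p1 (x s)) has_real_derivative
        p1_drift (x t) - l1 * singular_num (x t) / p1 (x t)) (at t within {0..})"
      using traj_p1_has_derivative[OF assms \<open>t \<ge> 0\<close>] .
    show "((\<lambda>s. l1 * singular_num (x s)) has_real_derivative l1 * rate_singular_num (x t))
        (at t within {0..})"
      using DERIV_cmult[OF traj_singular_num_has_derivative[OF assms \<open>t \<ge> 0\<close>]] .
    show "p1 (x t) \<noteq> 0"
      using assms \<open>t \<ge> 0\<close> unfolding cl_traj_def p1_def by blast
    show "\<bar>p1_drift (x t)\<bar> \<le> MD"
      using MD R \<open>t \<ge> 0\<close> by blast
    show "\<bar>l1 * rate_singular_num (x t)\<bar> \<le> l1 * MQ"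
      using MQ[OF R[OF \<open>t \<ge> 0\<close>]] l1_pos by (simp add: abs_mult)
  qed
  then obtain M where M: "\<And>t. t \<ge> 0 \<Longrightarrow> \<bar>l1 * singular_num (x t) / p1 (x t)\<bar> \<le> M"
    by blast
  have "\<bar>u (x t)\<bar> \<le> MG + M / l1" if "t \<ge> 0" for t
  proof -
    have "\<bar>singular_num (x t) / p1 (x t)\<bar> \<le> M / l1"
      using M[OF that] l1_pos by (simp add: abs_mult pos_le_divide_eq mult.commute)
    then show ?thesis
      unfolding feedback_eq using MG[OF R[OF that]] by linarith
  qed
  then show ?thesis
    by blast
qed

lemma traj_feedback_pos_on_sublevel:
  assumes "traj x" "V (x 0) \<le> c" "{\<eta>. V \<eta> \<le> c} \<subseteq> {\<eta>. u \<eta> > 0}" "t > 0"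
  shows "u (x t) > 0"
proof -
  have "V (x t) \<le> c"
    using traj_V3_antimono[OF assms(1) order_refl, of t] assms(2,4) by simp
  with assms(3) show ?thesis
    by blast
qed

end

theorem theorem3p3:
  fixes l1 l2 l3 us th c3 :: real
  assumes "l1 > 0" and "l2 > 0" and "l3 > 0" and "th > 0" and "c3 > 0"
  shows
    "(\<forall>x. cl_traj l1 l2 l3 us th c3 x \<longrightarrow>
        (\<forall>t\<ge>0. ((\<lambda>s. V3 l1 l2 l3 th (x s)) has_real_derivative
            (- th * (l3 / l2) * (phi l2 ((x t)$2))\<^sup>2
             - th * (l1 / l3) * (phi l3 (err1 (x t)))\<^sup>2
             - c3 * (phi l1 (err2 (x t)))\<^sup>2)) (at t within {0..})))
   \<and> (\<forall>\<epsilon>>0. \<exists>\<delta>>0. \<forall>x. cl_traj l1 l2 l3 us th c3 x \<and> norm (x 0) < \<delta> \<longrightarrow>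
        (\<forall>t\<ge>0. norm (x t) < \<epsilon>))
   \<and> (\<forall>x. cl_traj l1 l2 l3 us th c3 x \<longrightarrow> (x \<longlongrightarrow> 0) at_top)
   \<and> (\<forall>x. cl_traj l1 l2 l3 us th c3 x \<longrightarrow>
        (\<exists>M. \<forall>t\<ge>0. \<bar>feedback l1 l2 l3 us th c3 (x t)\<bar> \<le> M))
   \<and> (\<forall>x. cl_traj l1 l2 l3 us th c3 x \<and>
          x 0 \<in> \<Union>{S. \<exists>c. S = {eta. V3 l1 l2 l3 th eta \<le> c} \<and>
                          S \<subseteq> {eta. feedback l1 l2 l3 us th c3 eta > 0}} \<longrightarrow>
        (\<forall>t>0. feedback l1 l2 l3 us th c3 (x t) > 0))"
proof -
  interpret closed_loop l1 l2 l3 us th c3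
    using assms by unfold_locales
  have "- dissipation \<eta> = - th * (l3 / l2) * (phi l2 (\<eta>$2))\<^sup>2
      - th * (l1 / l3) * (phi l3 (err1 \<eta>))\<^sup>2 - c3 * (phi l1 (err2 \<eta>))\<^sup>2" for \<eta>
    unfolding dissipation_def by simp
  then show ?thesis
    using traj_V3_has_derivative traj_stable traj_tendsto_0 traj_feedback_bounded
      traj_feedback_pos_on_sublevel by auto
qed

end
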